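(* Let $(X,d)$ be a compact metric space and let $(X,f)$ be a flow or a semiflow on $X$ that has the weak reparametrized gluing orbit property. Then either $(X,f)$ is minimal, or $(X,f)$ has positive topological entropy, i.e. $h(f)>0$.
   Context: A flow (resp. semiflow) on $X$ is a continuous family $\{f^t\}$ of continuous maps $X\to X$ indexed by $t\in\mathbb{R}$ (resp. $t\in[0,\infty)$) with $f^0=\mathrm{id}$ and $f^{t+s}=f^t\circ f^s$. $(X,f)$ is minimal if for every $x\in X$ the forward orbit $\{f^t(x):t\ge 0\}$ is dense in $X$. $h(f)$ denotes the topological entropy of the flow/semiflow (defined via maximal cardinalities of $(t,\epsilon)$-separated sets). For $L\ge 1$, an $L$-reparametrization is a strictly increasing continuous function $\gamma:[0,\infty)\to[0,\infty)$ with $\gamma(0)=0$ and $L^{-1}\le \frac{\gamma(t_1)-\gamma(t_2)}{t_1-t_2}\le L$ for all $t_1\ne t_2$ in $[0,\infty)$. An orbit sequence of rank $k$ is a finite sequence $\mathscr{C}=\{(x_j,m_j)\in X\times[0,\infty):j=1,\dots,k\}$. A gap for it is a $(k-1)$-tuple $\mathscr{g}=\{t_j\in[0,\infty):j=1,\dots,k-1\}$. Given a reparametrization $\gamma$ and $\epsilon>0$, $(\mathscr{C},\mathscr{g},\gamma)$ is $\epsilon$-shadowed by $z\in X$ if for every $j=1,\dots,k$ and every $t\in[0,m_j]$ one has $d(f^{\gamma(s_j+t)}(z),f^t(x_j))<\epsilon$, where $s_1=0$ and $s_j=\sum_{i=1}^{j-1}(m_i+t_i)$ for $j\ge2$. $(X,f)$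 has the weak reparametrized gluing orbit property if for every $\epsilon>0$ there is $M=M(\epsilon)>0$ such that for every orbit sequence $\mathscr{C}$ there exist a gap $\mathscr{g}$ with $\max\mathscr{g}\le M$ and an $M$-reparametrization $\gamma$ such that $(\mathscr{C},\mathscr{g},\gamma)$ is $\epsilon$-shadowed by some point of $X$. *)

theory Defs
  imports "HOL-Analysis.Analysis"
begin

definition is_semiflow :: "'a::metric_space set \<Rightarrow> (real \<Rightarrow> 'a \<Rightarrow> 'a) \<Rightarrow> bool" where
  "is_semiflow X f \<longleftrightarrow>
     continuous_on ({0..} \<times> X) (\<lambda>(t, x). f t x) \<and>
     (\<forall>t\<ge>0. \<forall>x\<in>X. f t x \<in> X) \<and>
     (\<forall>x\<in>X. f 0 x = x) \<and>
     (\<forall>t\<ge>0. \<forall>s\<ge>0. \<forall>x\<in>X. f (t + s) x = f t (f s x))"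

definition is_flow :: "'a::metric_space set \<Rightarrow> (real \<Rightarrow> 'a \<Rightarrow> 'a) \<Rightarrow> bool" where
  "is_flow X f \<longleftrightarrow>
     continuous_on (UNIV \<times> X) (\<lambda>(t, x). f t x) \<and>
     (\<forall>t. \<forall>x\<in>X. f t x \<in> X) \<and>
     (\<forall>x\<in>X. f 0 x = x) \<and>
     (\<forall>t s. \<forall>x\<in>X. f (t + s) x = f t (f s x))"

definition minimal_flow :: "'a::metric_space set \<Rightarrow> (real \<Rightarrow> 'a \<Rightarrow> 'a) \<Rightarrow> bool" where
  "minimal_flow X f \<longleftrightarrow> (\<forall>x\<in>X. X \<subseteq> closure ((\<lambda>t. f t x) ` {0..}))"

definition separated_set :: "'a::metric_space set \<Rightarrow> (real \<Rightarrow> 'a \<Rightarrow> 'a) \<Rightarrow> real \<Rightarrow> real \<Rightarrow> 'a set \<Rightarrow> bool" where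
  "separated_set X f t \<epsilon> E \<longleftrightarrow> E \<subseteq> X \<and> finite E \<and>
     (\<forall>x\<in>E. \<forall>y\<in>E. x \<noteq> y \<longrightarrow> (\<exists>s\<in>{0..t}. dist (f s x) (f s y) > \<epsilon>))"

definition max_sep :: "'a::metric_space set \<Rightarrow> (real \<Rightarrow> 'a \<Rightarrow> 'a) \<Rightarrow> real \<Rightarrow> real \<Rightarrow> ereal" where
  "max_sep X f t \<epsilon> = (SUP E \<in> {E. separated_set X f t \<epsilon> E}. ereal (real (card E)))"

definition growth_rate :: "ereal \<Rightarrow> real \<Rightarrow> ereal" where
  "growth_rate N t = (if N = \<infinity> then \<infinity> else ereal (ln (real_of_ereal N) / t))"

text \<open>h(f) = lim_{\<epsilon>\<rightarrow>0} limsup_{t\<rightarrow>\<infinity>} (1/t) log s(t,\<epsilon>); the inner quantity is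
  nonincreasing in \<epsilon>, so the limit equals the supremum over \<epsilon> > 0.\<close>
definition top_entropy :: "'a::metric_space set \<Rightarrow> (real \<Rightarrow> 'a \<Rightarrow> 'a) \<Rightarrow> ereal" where
  "top_entropy X f = (SUP \<epsilon> \<in> {0<..}. Limsup at_top (\<lambda>t. growth_rate (max_sep X f t \<epsilon>) t))"

definition reparametrization :: "real \<Rightarrow> (real \<Rightarrow> real) \<Rightarrow> bool" where
  "reparametrization L \<gamma> \<longleftrightarrow> L \<ge> 1 \<and> strict_mono_on {0..} \<gamma> \<and> continuous_on {0..} \<gamma> \<and>
     \<gamma> 0 = 0 \<and> (\<forall>t\<ge>0. \<gamma> t \<ge> 0) \<and>
     (\<forall>t1\<ge>0. \<forall>t2\<ge>0. t1 \<noteq> t2 \<longrightarrow>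
        1 / L \<le> (\<gamma> t1 - \<gamma> t2) / (t1 - t2) \<and> (\<gamma> t1 - \<gamma> t2) / (t1 - t2) \<le> L)"

text \<open>Orbit sequence of rank k: (x j, m j) for j < k (0-indexed); gap g j for j < k - 1.\<close>
definition shadowed :: "(real \<Rightarrow> 'a::metric_space \<Rightarrow> 'a) \<Rightarrow> nat \<Rightarrow> (nat \<Rightarrow> 'a) \<Rightarrow> (nat \<Rightarrow> real)
    \<Rightarrow> (nat \<Rightarrow> real) \<Rightarrow> (real \<Rightarrow> real) \<Rightarrow> real \<Rightarrow> 'a \<Rightarrow> bool" where
  "shadowed f k x m g \<gamma> \<epsilon> z \<longleftrightarrow>
     (\<forall>j<k. \<forall>t\<in>{0..m j}.
        dist (f (\<gamma> ((\<Sum>i<j. m i + g i) + t)) z) (f t (x j)) < \<epsilon>)"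

definition weak_reparam_gluing :: "'a::metric_space set \<Rightarrow> (real \<Rightarrow> 'a \<Rightarrow> 'a) \<Rightarrow> bool" where
  "weak_reparam_gluing X f \<longleftrightarrow>
     (\<forall>\<epsilon>>0. \<exists>M>0. \<forall>k::nat. \<forall>x m. k \<ge> 1 \<longrightarrow> (\<forall>j<k. x j \<in> X \<and> m j \<ge> 0) \<longrightarrow>
        (\<exists>g \<gamma> z. (\<forall>j<k - 1. 0 \<le> g j \<and> g j \<le> M) \<and> reparametrization M \<gamma> \<and>
                  z \<in> X \<and> shadowed f k x m g \<gamma> \<epsilon> z))"

end

theory Submission
  imports Defs
begin

text \<open>If the flow is not minimal, some forward orbit of a point \<open>p\<close> stays at distance \<open>4 \<delta>\<close> from a
  point \<open>q\<close>. For every word \<open>W \<subseteq> {..<n}\<close>, glue the orbit sequence \<open>q, p, q, \<dots>, p, q\<close> in which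
  the \<open>i\<close>-th stay near \<open>p\<close> lasts long or short according to \<open>i \<in> W\<close>. The shadowing point returns
  \<open>\<delta>\<close>-close to \<open>q\<close> between excursions that stay \<open>3 \<delta>\<close>-far from it; since gaps and the
  reparametrization distort times only by bounded amounts, two shadowing orbits that remain
  \<open>\<delta>\<close>-close up to time \<open>n D\<close> visit \<open>q\<close> at synchronized times and hence read the same word.
  This gives \<open>2\<^sup>n\<close> points that are \<open>(n D, \<delta>)\<close>-separated, so \<open>h(f) \<ge> ln 2 / D > 0\<close>.\<close>

lemma reparametrization_increment_bounds:
  assumes "reparametrization L \<gamma>" "0 \<le> u" "u \<le> v"
  shows "(v - u) / L \<le> \<gamma> v - \<gamma> u" and "\<gamma> v - \<gamma> u \<le> L * (v - u)"
proof -
  have L1: "L \<ge> 1" using assms(1) unfolding reparametrization_def by simp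
  have "(v - u) / L \<le> \<gamma> v - \<gamma> u \<and> \<gamma> v - \<gamma> u \<le> L * (v - u)"
  proof (cases "u = v")
    case False
    then have vu: "v - u > 0" using assms by simp
    have "1 / L \<le> (\<gamma> v - \<gamma> u) / (v - u)" "(\<gamma> v - \<gamma> u) / (v - u) \<le> L"
      using assms False unfolding reparametrization_def by auto
    with vu L1 show ?thesis by (simp add: field_simps)
  qed simp
  then show "(v - u) / L \<le> \<gamma> v - \<gamma> u" "\<gamma> v - \<gamma> u \<le> L * (v - u)" by auto
qed

definition excursion_schedule ::
    "real \<Rightarrow> real \<Rightarrow> nat \<Rightarrow> (nat \<Rightarrow> real) \<Rightarrow> (nat \<Rightarrow> real) \<Rightarrow> (nat \<Rightarrow> real) \<Rightarrow> bool" where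
  "excursion_schedule C L n \<tau> a b \<longleftrightarrow> \<tau> 0 = 0 \<and>
     (\<forall>j<n. \<tau> j \<le> a j \<and> a j \<le> \<tau> j + C \<and> a j + L \<le> b j \<and> b j \<le> \<tau> (Suc j) \<and> \<tau> (Suc j) \<le> b j + C)"

text \<open>Inductively, the \<open>j\<close>-th visits are \<open>C\<close>-close; as \<open>L > 2 C\<close>, each next visit comes
  after the start of the other schedule's \<open>j\<close>-th excursion, hence, avoiding it, after its end.\<close>
lemma excursion_schedules_synchronized:
  assumes S: "excursion_schedule C L n \<tau> a b" and S': "excursion_schedule C L n \<tau>' a' b'"
    and CL: "0 \<le> C" "2 * C < L"
    and avoid: "\<forall>i<n. \<forall>j\<le>n. \<tau>' j \<notin> {a i..b i}"
    and avoid': "\<forall>i<n. \<forall>j\<le>n. \<tau> j \<notin> {a' i..b' i}"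
  shows "j \<le> n \<Longrightarrow> \<bar>\<tau> j - \<tau>' j\<bar> \<le> C"
proof (induction j)
  case 0
  then show ?case using S S' CL unfolding excursion_schedule_def by simp
next
  case (Suc j)
  then have j: "j < n" and IH: "\<bar>\<tau> j - \<tau>' j\<bar> \<le> C" by auto
  have h: "\<tau> j \<le> a j" "a j \<le> \<tau> j + C" "a j + L \<le> b j" "b j \<le> \<tau> (Suc j)" "\<tau> (Suc j) \<le> b j + C"
    using S j unfolding excursion_schedule_def by auto
  have h': "\<tau>' j \<le> a' j" "a' j \<le> \<tau>' j + C" "a' j + L \<le> b' j" "b' j \<le> \<tau>' (Suc j)" "\<tau>' (Suc j) \<le> b' j + C"
    using S' j unfolding excursion_schedule_def by auto
  have "a j < \<tau>' (Suc j)" using h h' IH CL by linarith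
  with avoid j Suc.prems have "b j < \<tau>' (Suc j)" by fastforce
  moreover have "a' j < \<tau> (Suc j)" using h h' IH CL by linarith
  with avoid' j Suc.prems have "b' j < \<tau> (Suc j)" by fastforce
  ultimately show ?case using h h' by linarith
qed

lemma excursion_length_determined:
  fixes M T l l' d d' :: real
  assumes "1 \<le> M" "T = 5 * M ^ 3"
    and "l \<in> {T, 2 * M\<^sup>2 * T}" "l' \<in> {T, 2 * M\<^sup>2 * T}"
    and "l / M \<le> d" "d \<le> M * l + 2 * M\<^sup>2"
    and "l' / M \<le> d'" "d' \<le> M * l' + 2 * M\<^sup>2"
    and "\<bar>d - d'\<bar> \<le> 2 * M\<^sup>2"
  shows "l = l'"
proof -
  have "M * 1 \<le> M * M\<^sup>2"
    using assms(1) by (intro mult_left_mono) (simp_all add: one_le_power)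
  then have M_le: "M \<le> M ^ 3" by (simp add: power2_eq_square power3_eq_cube)
  have short_long: "False" if "l\<^sub>1 = T" "l\<^sub>2 = 2 * M\<^sup>2 * T" "d\<^sub>1 \<le> M * l\<^sub>1 + 2 * M\<^sup>2"
      "l\<^sub>2 / M \<le> d\<^sub>2" "\<bar>d\<^sub>1 - d\<^sub>2\<bar> \<le> 2 * M\<^sup>2" for l\<^sub>1 l\<^sub>2 d\<^sub>1 d\<^sub>2
  proof -
    have "l\<^sub>2 / M = 2 * M * T" using that(2) assms(1) by (simp add: power2_eq_square)
    moreover have "d\<^sub>1 \<le> M * T + 2 * M\<^sup>2" using that by simp
    ultimately have "2 * M * T \<le> M * T + 4 * M\<^sup>2" using that by linarith
    then have "M * T \<le> M * (4 * M)" by (simp add: algebra_simps power2_eq_square)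
    then have "T \<le> 4 * M" using assms(1) by simp
    with M_le show False using assms(1,2) by linarith
  qed
  show ?thesis
    using assms(3-9) short_long[of l l' d d'] short_long[of l' l d' d] by (auto simp: abs_minus_commute)
qed

definition segment_start :: "(nat \<Rightarrow> real) \<Rightarrow> (nat \<Rightarrow> real) \<Rightarrow> nat \<Rightarrow> real" where
  "segment_start m g j = (\<Sum>i<j. m i + g i)"

text \<open>Segment lengths of the orbit sequence \<open>q, p, q, p, \<dots>, q\<close>: time \<open>0\<close> at \<open>q\<close>, time \<open>l i\<close>
  along the \<open>i\<close>-th copy of \<open>p\<close>.\<close>
definition alternating_lengths :: "(nat \<Rightarrow> real) \<Rightarrow> nat \<Rightarrow> real" where
  "alternating_lengths l j = (if even j then 0 else l (j div 2))"

lemma segment_start_odd: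
  "segment_start (alternating_lengths l) g (Suc (2 * j)) = segment_start (alternating_lengths l) g (2 * j) + g (2 * j)"
  by (simp add: segment_start_def alternating_lengths_def)

lemma segment_start_even:
  "segment_start (alternating_lengths l) g (2 * Suc j) =
     segment_start (alternating_lengths l) g (Suc (2 * j)) + l j + g (Suc (2 * j))"
  by (simp add: segment_start_def alternating_lengths_def)

locale alternating_shadow =
  fixes f :: "real \<Rightarrow> 'a::metric_space \<Rightarrow> 'a" and p q :: 'a and \<delta> M :: real
    and l :: "nat \<Rightarrow> real" and n :: nat and g :: "nat \<Rightarrow> real" and \<gamma> :: "real \<Rightarrow> real" and z :: 'a
  assumes q_fixed: "f 0 q = q"
    and orbit_far: "\<forall>t\<ge>0. 4 * \<delta> \<le> dist (f t p) q"
    and lengths_nonneg: "\<forall>i<n. 0 \<le> l i"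
    and gaps: "\<forall>j<2 * n. 0 \<le> g j \<and> g j \<le> M"
    and reparam: "reparametrization M \<gamma>"
    and shadow: "shadowed f (2 * n + 1) (\<lambda>j. if even j then q else p) (alternating_lengths l) g \<gamma> \<delta> z"
begin

abbreviation "S \<equiv> segment_start (alternating_lengths l) g"

definition visit_time :: "nat \<Rightarrow> real" where "visit_time j = \<gamma> (S (2 * j))"
definition excursion_start :: "nat \<Rightarrow> real" where "excursion_start j = \<gamma> (S (Suc (2 * j)))"
definition excursion_end :: "nat \<Rightarrow> real" where "excursion_end j = \<gamma> (S (Suc (2 * j)) + l j)"

lemma M_ge_1: "1 \<le> M"
  using reparam unfolding reparametrization_def by simp

lemma segment_start_nonneg: "k \<le> 2 * n \<Longrightarrow> 0 \<le> S k"
  unfolding segment_start_def alternating_lengths_def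
  using lengths_nonneg gaps by (intro sum_nonneg) auto

lemma segment_start_le:
  assumes "\<forall>i<n. l i \<le> \<Lambda>"
  shows "j \<le> n \<Longrightarrow> S (2 * j) \<le> j * (\<Lambda> + 2 * M)"
proof (induction j)
  case (Suc j)
  have "S (2 * Suc j) = S (2 * j) + g (2 * j) + l j + g (Suc (2 * j))"
    using segment_start_odd segment_start_even by simp
  moreover have "g (2 * j) \<le> M" "g (Suc (2 * j)) \<le> M" "l j \<le> \<Lambda>" using gaps assms Suc.prems by auto
  ultimately show ?case using Suc by (simp add: algebra_simps)
qed (simp add: segment_start_def)

lemma visit_time_range:
  assumes "\<forall>i<n. l i \<le> \<Lambda>" "j \<le> n"
  shows "0 \<le> visit_time j" "visit_time j \<le> M * (n * (\<Lambda> + 2 * M))"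
proof -
  have S0: "0 \<le> S (2 * j)" using segment_start_nonneg assms(2) by simp
  have "\<gamma> 0 = 0" using reparam unfolding reparametrization_def by simp
  then have "visit_time j \<le> M * S (2 * j)"
    using reparametrization_increment_bounds(2)[OF reparam order_refl S0] by (simp add: visit_time_def)
  also have "\<dots> \<le> M * (j * (\<Lambda> + 2 * M))"
    using segment_start_le[OF assms] M_ge_1 by simp
  also have "\<dots> \<le> M * (n * (\<Lambda> + 2 * M))"
  proof (cases "j = n")
    case False
    then have "0 \<le> \<Lambda>" using assms lengths_nonneg by force
    then show ?thesis using assms M_ge_1 by (intro mult_left_mono mult_right_mono) auto
  qed simp
  finally show "visit_time j \<le> M * (n * (\<Lambda> + 2 * M))" .
  show "0 \<le> visit_time j" using reparam S0 unfolding reparametrization_def visit_time_def by simp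
qed

lemma excursion_timing:
  assumes "j < n"
  shows "visit_time j \<le> excursion_start j" "excursion_start j \<le> visit_time j + M\<^sup>2"
    "excursion_start j + l j / M \<le> excursion_end j" "excursion_end j \<le> excursion_start j + M * l j"
    "excursion_end j \<le> visit_time (Suc j)" "visit_time (Suc j) \<le> excursion_end j + M\<^sup>2"
proof -
  have S0: "0 \<le> S (2 * j)" "0 \<le> S (Suc (2 * j))" using segment_start_nonneg assms by auto
  have g: "0 \<le> g (2 * j)" "g (2 * j) \<le> M" "0 \<le> g (Suc (2 * j))" "g (Suc (2 * j)) \<le> M"
    using gaps assms by auto
  have l: "0 \<le> l j" using lengths_nonneg assms by simp
  note bounds = reparametrization_increment_bounds[OF reparam]
  note odd = segment_start_odd[of l g j] and even = segment_start_even[of l g j]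
  have M: "0 < M" using M_ge_1 by simp
  have "g (2 * j) / M \<le> excursion_start j - visit_time j"
    "excursion_start j - visit_time j \<le> M * g (2 * j)"
    using bounds[OF S0(1), of "S (Suc (2 * j))"] odd g
    unfolding visit_time_def excursion_start_def by simp_all
  moreover have "0 \<le> g (2 * j) / M" "M * g (2 * j) \<le> M\<^sup>2"
    using g M by (auto simp: power2_eq_square)
  ultimately show "visit_time j \<le> excursion_start j" "excursion_start j \<le> visit_time j + M\<^sup>2"
    by linarith+
  show "excursion_start j + l j / M \<le> excursion_end j" "excursion_end j \<le> excursion_start j + M * l j"
    using bounds[OF S0(2), of "S (Suc (2 * j)) + l j"] l
    unfolding excursion_start_def excursion_end_def by auto
  have "g (Suc (2 * j)) / M \<le> visit_time (Suc j) - excursion_end j"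
    "visit_time (Suc j) - excursion_end j \<le> M * g (Suc (2 * j))"
    using bounds[of "S (Suc (2 * j)) + l j" "S (2 * Suc j)"] S0 l even g
    unfolding visit_time_def excursion_end_def by simp_all
  moreover have "0 \<le> g (Suc (2 * j)) / M" "M * g (Suc (2 * j)) \<le> M\<^sup>2"
    using g M by (auto simp: power2_eq_square)
  ultimately show "excursion_end j \<le> visit_time (Suc j)" "visit_time (Suc j) \<le> excursion_end j + M\<^sup>2"
    by linarith+
qed

lemma excursion_schedule_visits:
  assumes "\<forall>i<n. \<Lambda> \<le> l i"
  shows "excursion_schedule (M\<^sup>2) (\<Lambda> / M) n visit_time excursion_start excursion_end"
proof -
  have "visit_time 0 = 0" using reparam by (simp add: visit_time_def segment_start_def reparametrization_def)
  moreover have "\<Lambda> / M \<le> l j / M" if "j < n" for j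
    using assms that M_ge_1 by (simp add: divide_right_mono)
  ultimately show ?thesis
    unfolding excursion_schedule_def using excursion_timing by fastforce
qed

lemma visit_increment_bounds:
  assumes "j < n"
  shows "l j / M \<le> visit_time (Suc j) - visit_time j"
    and "visit_time (Suc j) - visit_time j \<le> M * l j + 2 * M\<^sup>2"
proof -
  have "0 \<le> l j / M" using lengths_nonneg assms M_ge_1 by simp
  then show "l j / M \<le> visit_time (Suc j) - visit_time j"
    "visit_time (Suc j) - visit_time j \<le> M * l j + 2 * M\<^sup>2"
    using excursion_timing[OF assms] by linarith+
qed

lemma near_at_visit:
  assumes "j \<le> n"
  shows "dist (f (visit_time j) z) q < \<delta>"
proof -
  have "2 * j < 2 * n + 1" "(0::real) \<in> {0..alternating_lengths l (2 * j)}"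
    using assms by (auto simp: alternating_lengths_def)
  then show ?thesis
    using shadow q_fixed unfolding shadowed_def by (fastforce simp: visit_time_def segment_start_def)
qed

lemma far_during_excursion:
  assumes j: "j < n" and u: "u \<in> {excursion_start j..excursion_end j}"
  shows "3 * \<delta> < dist (f u z) q"
proof -
  let ?s = "S (Suc (2 * j))"
  have "0 \<le> ?s" "0 \<le> l j" using segment_start_nonneg lengths_nonneg j by auto
  moreover have "continuous_on {?s..?s + l j} \<gamma>"
    using reparam \<open>0 \<le> ?s\<close> unfolding reparametrization_def by (auto intro: continuous_on_subset)
  ultimately obtain t where t: "?s \<le> t" "t \<le> ?s + l j" "\<gamma> t = u"
    using IVT'[of \<gamma> ?s u "?s + l j"] u unfolding excursion_start_def excursion_end_def by auto
  have "Suc (2 * j) < 2 * n + 1" "t - ?s \<in> {0..alternating_lengths l (Suc (2 * j))}"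
    using j t by (auto simp: alternating_lengths_def)
  then have "dist (f u z) (f (t - ?s) p) < \<delta>"
    using shadow t(3) unfolding shadowed_def by (fastforce simp: segment_start_def)
  moreover have "4 * \<delta> \<le> dist (f (t - ?s) p) q" using orbit_far t by simp
  moreover have "dist (f (t - ?s) p) q \<le> dist (f u z) (f (t - ?s) p) + dist (f u z) q"
    by (metis dist_commute dist_triangle)
  ultimately show ?thesis by linarith
qed

lemma excursion_avoids_near_times:
  assumes "j < n" "dist (f s z) (f s z') \<le> \<delta>" "dist (f s z') q < \<delta>"
  shows "s \<notin> {excursion_start j..excursion_end j}"
proof
  assume "s \<in> {excursion_start j..excursion_end j}"
  then have "3 * \<delta> < dist (f s z) q" using far_during_excursion assms(1) by blast
  moreover have "dist (f s z) q \<le> dist (f s z) (f s z') + dist (f s z') q" by (rule dist_triangle)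
  ultimately show False using assms(2,3) zero_le_dist[of "f s z'" q] by linarith
qed

end

text \<open>Two shadowing orbits that stay \<open>\<delta>\<close>-close read the same word: each one's visits near \<open>q\<close>
  avoid the other's excursions, so the visit times stay synchronized and the excursion lengths
  \<open>T\<close> and \<open>2 M\<^sup>2 T\<close> can be told apart despite the distortion of the reparametrizations.\<close>
lemma alternating_shadows_same_lengths:
  assumes w: "alternating_shadow f p q \<delta> M l n g \<gamma> z" and w': "alternating_shadow f p q \<delta> M l' n g' \<gamma>' z'"
    and T: "T = 5 * M ^ 3"
    and lengths: "\<forall>i<n. l i \<in> {T, 2 * M\<^sup>2 * T}" "\<forall>i<n. l' i \<in> {T, 2 * M\<^sup>2 * T}"
    and close: "\<forall>s\<in>{0..M * (n * (2 * M\<^sup>2 * T + 2 * M))}. dist (f s z) (f s z') \<le> \<delta>"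
    and i: "i < n"
  shows "l i = l' i"
proof -
  interpret w: alternating_shadow f p q \<delta> M l n g \<gamma> z by (rule w)
  interpret w': alternating_shadow f p q \<delta> M l' n g' \<gamma>' z' by (rule w')
  have M: "1 \<le> M" by (rule w.M_ge_1)
  have T_pos: "0 < T" using M T by simp
  have "1 \<le> M\<^sup>2" using M by (simp add: one_le_power)
  then have "T \<le> 2 * M\<^sup>2 * T" using T_pos by simp
  then have upper: "\<forall>i<n. l i \<le> 2 * M\<^sup>2 * T" "\<forall>i<n. l' i \<le> 2 * M\<^sup>2 * T"
    and lower: "\<forall>i<n. T \<le> l i" "\<forall>i<n. T \<le> l' i"
    using lengths by auto
  have avoid: "\<forall>i<n. \<forall>j\<le>n. w'.visit_time j \<notin> {w.excursion_start i..w.excursion_end i}"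
  proof (intro allI impI)
    fix i j assume "i < n" "j \<le> n"
    moreover have "dist (f (w'.visit_time j) z) (f (w'.visit_time j) z') \<le> \<delta>"
      using close w'.visit_time_range[OF upper(2) \<open>j \<le> n\<close>] by simp
    ultimately show "w'.visit_time j \<notin> {w.excursion_start i..w.excursion_end i}"
      using w.excursion_avoids_near_times[OF _ _ w'.near_at_visit] by blast
  qed
  have avoid': "\<forall>i<n. \<forall>j\<le>n. w.visit_time j \<notin> {w'.excursion_start i..w'.excursion_end i}"
  proof (intro allI impI)
    fix i j assume "i < n" "j \<le> n"
    moreover have "dist (f (w.visit_time j) z') (f (w.visit_time j) z) \<le> \<delta>"
      using close w.visit_time_range[OF upper(1) \<open>j \<le> n\<close>] by (simp add: dist_commute)
    ultimately show "w.visit_time j \<notin> {w'.excursion_start i..w'.excursion_end i}"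
      using w'.excursion_avoids_near_times[OF _ _ w.near_at_visit] by blast
  qed
  have "2 * M\<^sup>2 < T / M" using M T by (simp add: power2_eq_square power3_eq_cube)
  then have sync: "\<bar>w.visit_time j - w'.visit_time j\<bar> \<le> M\<^sup>2" if "j \<le> n" for j
    using excursion_schedules_synchronized[OF w.excursion_schedule_visits[OF lower(1)]
        w'.excursion_schedule_visits[OF lower(2)] _ _ avoid avoid' that] by simp
  have "\<bar>(w.visit_time (Suc i) - w.visit_time i) - (w'.visit_time (Suc i) - w'.visit_time i)\<bar> \<le> 2 * M\<^sup>2"
    using sync[of i] sync[of "Suc i"] i by (simp add: abs_le_iff)
  then show ?thesis
    using lengths i by (intro excursion_length_determined[OF M T _ _
        w.visit_increment_bounds[OF i] w'.visit_increment_bounds[OF i]]) auto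
qed

lemma max_sep_ge_card: "separated_set X f t \<epsilon> E \<Longrightarrow> ereal (real (card E)) \<le> max_sep X f t \<epsilon>"
  unfolding max_sep_def by (rule SUP_upper) simp

lemma top_entropy_ge_of_exponential_separation:
  assumes D: "D > 0" and \<epsilon>: "\<epsilon> > 0"
    and sep: "\<And>n. \<exists>E. separated_set X f (n * D) \<epsilon> E \<and> card E = 2 ^ n"
  shows "ereal (ln 2 / D) \<le> top_entropy X f"
proof -
  have rate: "ereal (ln 2 / D) \<le> growth_rate (max_sep X f (n * D) \<epsilon>) (n * D)" if n: "n \<ge> 1" for n :: nat
  proof (cases "max_sep X f (n * D) \<epsilon> = \<infinity>")
    case False
    obtain E where E: "separated_set X f (n * D) \<epsilon> E" "card E = 2 ^ n" using sep by blast
    from max_sep_ge_card[OF E(1)] have "ereal (2 ^ n) \<le> max_sep X f (n * D) \<epsilon>"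
      unfolding E(2) by simp
    with False obtain r where r: "max_sep X f (n * D) \<epsilon> = ereal r" "2 ^ n \<le> r"
      by (cases "max_sep X f (n * D) \<epsilon>") auto
    have "ln 2 / D = ln (2 ^ n) / (n * D)" using n by (simp add: ln_realpow)
    also have "\<dots> \<le> ln r / (n * D)"
      using r(2) D by (intro divide_right_mono ln_mono) auto
    finally show ?thesis using r by (simp add: growth_rate_def)
  qed (simp add: growth_rate_def)
  have "ereal (ln 2 / D) \<le> Limsup at_top (\<lambda>t. growth_rate (max_sep X f t \<epsilon>) t)"
    unfolding Limsup_def
  proof (rule INF_greatest)
    fix P :: "real \<Rightarrow> bool" assume "P \<in> {P. eventually P at_top}"
    then obtain t\<^sub>0 where P: "\<forall>t\<ge>t\<^sub>0. P t" unfolding eventually_at_top_linorder by blast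
    obtain n :: nat where n: "max 1 (t\<^sub>0 / D) < n" using reals_Archimedean2 by blast
    then have "t\<^sub>0 < n * D" using D by (simp add: divide_less_eq)
    with P have "P (n * D)" by simp
    moreover have "n \<ge> 1" using n by simp
    ultimately show "ereal (ln 2 / D) \<le> (SUP t\<in>{t. P t}. growth_rate (max_sep X f t \<epsilon>) t)"
      using rate by (intro SUP_upper2[of "n * D"]) simp_all
  qed
  also have "\<dots> \<le> top_entropy X f"
    unfolding top_entropy_def using \<epsilon> by (intro SUP_upper) auto
  finally show ?thesis .
qed

lemma not_minimal_flow_far_orbit:
  assumes "\<not> minimal_flow X f"
  obtains p q \<delta> where "p \<in> X" "q \<in> X" "\<delta> > 0" "\<forall>t\<ge>0. 4 * \<delta> \<le> dist (f t p) q"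
proof -
  obtain p q where "p \<in> X" "q \<in> X" "q \<notin> closure ((\<lambda>t. f t p) ` {0..})"
    using assms unfolding minimal_flow_def by blast
  then obtain e where "e > 0" "\<forall>y\<in>(\<lambda>t. f t p) ` {0..}. \<not> dist y q < e"
    unfolding closure_approachable by blast
  then have "\<forall>t\<ge>0. 4 * (e / 4) \<le> dist (f t p) q" by force
  with \<open>p \<in> X\<close> \<open>q \<in> X\<close> \<open>e > 0\<close> show thesis by (intro that[of p q "e / 4"]) auto
qed

lemma weak_reparam_gluing_alternating_shadow:
  assumes glue: "weak_reparam_gluing X f" and X: "p \<in> X" "q \<in> X" and q: "f 0 q = q"
    and \<delta>: "\<delta> > 0" and far: "\<forall>t\<ge>0. 4 * \<delta> \<le> dist (f t p) q"
  obtains M where "M \<ge> 1"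
    and "\<And>n l. \<forall>i<n. 0 \<le> l i \<Longrightarrow> \<exists>z\<in>X. \<exists>g \<gamma>. alternating_shadow f p q \<delta> M l n g \<gamma> z"
proof -
  obtain M where M: "\<forall>k::nat. \<forall>x m. k \<ge> 1 \<longrightarrow> (\<forall>j<k. x j \<in> X \<and> m j \<ge> 0) \<longrightarrow>
      (\<exists>g \<gamma> z. (\<forall>j<k - 1. 0 \<le> g j \<and> g j \<le> M) \<and> reparametrization M \<gamma> \<and> z \<in> X \<and> shadowed f k x m g \<gamma> \<delta> z)"
    using glue \<delta> unfolding weak_reparam_gluing_def by blast
  have "M \<ge> 1"
    using M[rule_format, of 1 "\<lambda>_. q" "\<lambda>_. 0"] X unfolding reparametrization_def by auto
  moreover have "\<exists>z\<in>X. \<exists>g \<gamma>. alternating_shadow f p q \<delta> M l n g \<gamma> z" if l: "\<forall>i<n. 0 \<le> l i" for n l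
  proof -
    have "\<forall>j<2 * n + 1. (if even j then q else p) \<in> X \<and> 0 \<le> alternating_lengths l j"
      using X l by (auto simp: alternating_lengths_def elim!: oddE)
    then obtain g \<gamma> z where "\<forall>j<2 * n. 0 \<le> g j \<and> g j \<le> M" "reparametrization M \<gamma>" "z \<in> X"
      "shadowed f (2 * n + 1) (\<lambda>j. if even j then q else p) (alternating_lengths l) g \<gamma> \<delta> z"
      using M[rule_format, of "2 * n + 1" "\<lambda>j. if even j then q else p" "alternating_lengths l"]
      by auto
    with q far l show ?thesis unfolding alternating_shadow_def by blast
  qed
  ultimately show thesis by (rule that)
qed

lemma weak_reparam_gluing_exponential_separation:
  assumes "weak_reparam_gluing X f" "p \<in> X" "q \<in> X" "f 0 q = q"
    and \<delta>: "\<delta> > 0" and "\<forall>t\<ge>0. 4 * \<delta> \<le> dist (f t p) q"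
  shows "\<exists>D>0. \<forall>n. \<exists>E. separated_set X f (n * D) \<delta> E \<and> card E = 2 ^ n"
proof -
  obtain M where M: "M \<ge> 1"
    and glued: "\<And>n l. \<forall>i<n. 0 \<le> l i \<Longrightarrow> \<exists>z\<in>X. \<exists>g \<gamma>. alternating_shadow f p q \<delta> M l n g \<gamma> z"
    using weak_reparam_gluing_alternating_shadow[OF assms] by blast
  define T where "T = 5 * M ^ 3"
  define lengths where "lengths W i = (if i \<in> W then 2 * M\<^sup>2 * T else T)" for W :: "nat set" and i :: nat
  define D where "D = M * (2 * M\<^sup>2 * T + 2 * M)"
  have "T > 0" "1 \<le> M\<^sup>2" using M by (simp_all add: T_def one_le_power)
  then have "1 * T < (2 * M\<^sup>2) * T" by (intro mult_strict_right_mono) auto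
  then have T_short: "T < 2 * M\<^sup>2 * T" by simp
  have D: "D > 0" using M \<open>T > 0\<close> unfolding D_def by (intro mult_pos_pos add_pos_pos) auto
  have "\<forall>n W. \<exists>z\<in>X. \<exists>g \<gamma>. alternating_shadow f p q \<delta> M (lengths W) n g \<gamma> z"
    using glued \<open>T > 0\<close> by (simp add: lengths_def)
  then obtain Z where Z: "\<And>n W. Z n W \<in> X"
    and shadow: "\<And>n W. \<exists>g \<gamma>. alternating_shadow f p q \<delta> M (lengths W) n g \<gamma> (Z n W)"
    by metis
  have words_separated: "\<exists>s\<in>{0..n * D}. \<delta> < dist (f s (Z n W)) (f s (Z n W'))"
    if W: "W \<subseteq> {..<n}" "W' \<subseteq> {..<n}" "W \<noteq> W'" for n W W'
  proof (rule ccontr)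
    assume "\<not> ?thesis"
    then have close: "\<forall>s\<in>{0..M * (n * (2 * M\<^sup>2 * T + 2 * M))}. dist (f s (Z n W)) (f s (Z n W')) \<le> \<delta>"
      by (auto simp: D_def algebra_simps not_less)
    obtain g \<gamma> g' \<gamma>' where w: "alternating_shadow f p q \<delta> M (lengths W) n g \<gamma> (Z n W)"
      and w': "alternating_shadow f p q \<delta> M (lengths W') n g' \<gamma>' (Z n W')"
      using shadow by blast
    have "lengths W i = lengths W' i" if "i < n" for i
      using alternating_shadows_same_lengths[OF w w' T_def _ _ close that] by (simp add: lengths_def)
    then have "\<forall>i<n. i \<in> W \<longleftrightarrow> i \<in> W'" using T_short unfolding lengths_def by (metis order_less_irrefl)
    with W show False by blast
  qed
  have "\<exists>E. separated_set X f (n * D) \<delta> E \<and> card E = 2 ^ n" for n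
  proof (intro exI conjI)
    have "inj_on (Z n) (Pow {..<n})"
    proof (rule inj_onI)
      fix W W' assume "W \<in> Pow {..<n}" "W' \<in> Pow {..<n}" "Z n W = Z n W'"
      then show "W = W'" using words_separated[of W n W'] \<delta> by auto
    qed
    then show "card (Z n ` Pow {..<n}) = 2 ^ n" by (simp add: card_image card_Pow)
    show "separated_set X f (n * D) \<delta> (Z n ` Pow {..<n})"
      unfolding separated_set_def using Z words_separated by blast
  qed
  with D show ?thesis by blast
qed

theorem theorem1p1:
  fixes X :: "'a::metric_space set" and f :: "real \<Rightarrow> 'a \<Rightarrow> 'a"
  assumes "compact X"
    and "is_flow X f \<or> is_semiflow X f"
    and "weak_reparam_gluing X f"
  shows "minimal_flow X f \<or> top_entropy X f > 0"
proof (cases "minimal_flow X f")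
  case False
  then obtain p q \<delta> where pq: "p \<in> X" "q \<in> X" and \<delta>: "\<delta> > 0"
    and far: "\<forall>t\<ge>0. 4 * \<delta> \<le> dist (f t p) q"
    by (rule not_minimal_flow_far_orbit)
  have "f 0 q = q" using assms(2) pq unfolding is_flow_def is_semiflow_def by auto
  then obtain D where D: "D > 0" and sep: "\<forall>n. \<exists>E. separated_set X f (n * D) \<delta> E \<and> card E = 2 ^ n"
    using weak_reparam_gluing_exponential_separation[OF assms(3) pq _ \<delta> far] by blast
  have "ereal (ln 2 / D) \<le> top_entropy X f"
    using top_entropy_ge_of_exponential_separation[OF D \<delta>] sep by blast
  moreover have "0 < ln 2 / D" using D by simp
  ultimately show ?thesis by (meson ereal_less(2) order_less_le_trans)
qed simp

end
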